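(* Let $M\ge1$ and $n\ge2$ be integers, $d\in\{1,\dots,n-1\}$, and $0<p<1$. Let $c_1,\dots,c_n$ be independent Bernoulli($p$) bits (the tagged code word), and let $U_1,\dots,U_n$ be random bits, independent of each other and of the $c_i$, with $\Pr(U_i=0)=(1-p)^M$ for $i\le d$ and $\Pr(U_i=0)=(1-p)^{M-1}$ for $i>d$. Say position $i$ is covered if $c_i=0$, or $U_i=1$, or ($i>d$ and $c_{i-d}=1$). Then \[\Pr(\text{every position } i\in\{1,\dots,n\}\text{ is covered})\le\big(1-p(1-p)^M\big)^n.\]
   Context: This models a tagged code word covered by its own copy shifted by $d$ positions together with the other active users: $U_i$ is the Boolean OR of the bits of the other active users at position $i$ ($M$ of them at positions $i\le d$, $M-1$ at positions $i>d$), each of these bits being independently $1$ with probability $p$. *)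

theory Defs
  imports "HOL-Probability.Probability"
begin

text \<open>Bits are modelled as booleans (True = 1). The tagged code word c and the
  covering bits U are independent product distributions on positions 1..n.\<close>

definition codeword_pmf :: "nat \<Rightarrow> real \<Rightarrow> (nat \<Rightarrow> bool) pmf" where
  "codeword_pmf n p = Pi_pmf {1..n} False (\<lambda>i. bernoulli_pmf p)"

definition cover_pmf :: "nat \<Rightarrow> nat \<Rightarrow> nat \<Rightarrow> real \<Rightarrow> (nat \<Rightarrow> bool) pmf" where
  "cover_pmf M n d p = Pi_pmf {1..n} False
     (\<lambda>i. bernoulli_pmf (1 - (1 - p) ^ (if i \<le> d then M else M - 1)))"

definition covered :: "nat \<Rightarrow> (nat \<Rightarrow> bool) \<Rightarrow> (nat \<Rightarrow> bool) \<Rightarrow> nat \<Rightarrow> bool" where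
  "covered d c U i \<longleftrightarrow> \<not> c i \<or> U i \<or> (i > d \<and> c (i - d))"

end

(* Given the code word c, the bits U are independent, so the probability that every position is
   covered is a product of conditional cover probabilities, the factor at position i depending
   only on c i and c (i - d).  The expectation over c is computed by integrating out c n, c (n - 1),
   ... one at a time while carrying a weight on each of the last d bits, the only ones later
   factors still depend on.  Integrating out the last bit of a chain i, i + d, i + 2d, ... against
   a weight h leaves the weight chain_step h on the previous bit of that chain, and the first bit
   of a chain is integrated out by chain_start.  The identity
     chain_start (chain_step h) = mu * chain_start h - (p (1 - p)^M)^2 * h True,
   with mu = 1 - p (1 - p)^M = chain_start 1, shows that every position costs at most a factor mu. *)

theory Submission
  imports Defs
begin

lemma emeasure_pair_pmf_fiberwise:
  "emeasure (pair_pmf A B) {(x, y). P x y} = (\<integral>\<^sup>+x. emeasure B {y. P x y} \<partial>A)"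
proof -
  have "emeasure (pair_pmf A B) {(x, y). P x y} = (\<integral>\<^sup>+z. indicator {(x, y). P x y} z \<partial>pair_pmf A B)"
    by simp
  also have "\<dots> = (\<integral>\<^sup>+x. \<integral>\<^sup>+y. indicator {y. P x y} y \<partial>B \<partial>A)"
    by (simp add: nn_integral_pair_pmf' indicator_def)
  finally show ?thesis
    by simp
qed

lemma nn_integral_Pi_pmf_insert_bernoulli:
  assumes "finite A" "i \<notin> A" "0 \<le> p" "p \<le> 1" "\<And>c. 0 \<le> f c"
  shows "(\<integral>\<^sup>+c. ennreal (f c) \<partial>Pi_pmf (insert i A) dflt (\<lambda>_. bernoulli_pmf p))
       = (\<integral>\<^sup>+c. ennreal (p * f (c(i := True)) + (1 - p) * f (c(i := False)))
            \<partial>Pi_pmf A dflt (\<lambda>_. bernoulli_pmf p))"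
proof -
  let ?P = "Pi_pmf A dflt (\<lambda>_. bernoulli_pmf p)"
  have "(\<integral>\<^sup>+c. ennreal (f c) \<partial>Pi_pmf (insert i A) dflt (\<lambda>_. bernoulli_pmf p))
      = (\<integral>\<^sup>+y. \<integral>\<^sup>+c. ennreal (f (c(i := y))) \<partial>?P \<partial>bernoulli_pmf p)"
    using assms(1,2) by (simp add: Pi_pmf_insert nn_integral_pair_pmf')
  also have "\<dots> = (\<integral>\<^sup>+c. ennreal (f (c(i := True))) \<partial>?P) * ennreal p
                 + (\<integral>\<^sup>+c. ennreal (f (c(i := False))) \<partial>?P) * ennreal (1 - p)"
    using assms(3,4) by simp
  also have "\<dots> = (\<integral>\<^sup>+c. ennreal (f (c(i := True))) * ennreal p
                        + ennreal (f (c(i := False))) * ennreal (1 - p) \<partial>?P)"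
    by (simp add: nn_integral_add nn_integral_multc)
  also have "\<dots> = (\<integral>\<^sup>+c. ennreal (p * f (c(i := True)) + (1 - p) * f (c(i := False))) \<partial>?P)"
    using assms(3-5) by (intro nn_integral_cong) (simp add: ennreal_plus ennreal_mult mult.commute)
  finally show ?thesis .
qed

definition busy_prob :: "nat \<Rightarrow> nat \<Rightarrow> real \<Rightarrow> nat \<Rightarrow> real" where
  "busy_prob M d p i = 1 - (1 - p) ^ (if i \<le> d then M else M - 1)"

definition cover_cond_prob :: "nat \<Rightarrow> nat \<Rightarrow> real \<Rightarrow> (nat \<Rightarrow> bool) \<Rightarrow> nat \<Rightarrow> real" where
  "cover_cond_prob M d p c i = (if \<not> c i \<or> (d < i \<and> c (i - d)) then 1 else busy_prob M d p i)"

lemma busy_prob_bounds: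
  assumes "0 \<le> p" "p \<le> 1"
  shows "0 \<le> busy_prob M d p i" "busy_prob M d p i \<le> 1"
  using assms by (simp_all add: busy_prob_def power_le_one)

lemma cover_cond_prob_nonneg: "0 \<le> p \<Longrightarrow> p \<le> 1 \<Longrightarrow> 0 \<le> cover_cond_prob M d p c i"
  using busy_prob_bounds by (simp add: cover_cond_prob_def)

lemma prob_all_covered_given_codeword:
  assumes "0 \<le> p" "p \<le> 1"
  shows "measure_pmf.prob (cover_pmf M n d p) {U. \<forall>i\<in>{1..n}. covered d c U i}
       = (\<Prod>i\<in>{1..n}. cover_cond_prob M d p c i)"
proof -
  have "{U. \<forall>i\<in>{1..n}. covered d c U i}
      = Pi {1..n} (\<lambda>i. {b. \<not> c i \<or> b \<or> (d < i \<and> c (i - d))})"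
    by (auto simp: covered_def)
  moreover have "measure_pmf.prob (bernoulli_pmf (busy_prob M d p i))
        {b. \<not> c i \<or> b \<or> (d < i \<and> c (i - d))} = cover_cond_prob M d p c i" for i
  proof (cases "\<not> c i \<or> (d < i \<and> c (i - d))")
    case False
    then have "{b. \<not> c i \<or> b \<or> (d < i \<and> c (i - d))} = {True}" by auto
    then show ?thesis
      using False busy_prob_bounds[OF assms] by (auto simp: measure_pmf_single cover_cond_prob_def)
  qed (simp add: cover_cond_prob_def)
  ultimately show ?thesis
    by (simp add: cover_pmf_def busy_prob_def[symmetric] measure_Pi_pmf_Pi)
qed

definition chain_start :: "nat \<Rightarrow> real \<Rightarrow> (bool \<Rightarrow> real) \<Rightarrow> real" where
  "chain_start M p h = p * (1 - (1 - p) ^ M) * h True + (1 - p) * h False"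

definition chain_step :: "nat \<Rightarrow> real \<Rightarrow> (bool \<Rightarrow> real) \<Rightarrow> bool \<Rightarrow> real" where
  "chain_step M p h s = p * (if s then 1 else 1 - (1 - p) ^ (M - 1)) * h True + (1 - p) * h False"

lemma chain_start_chain_step:
  assumes "1 \<le> M"
  shows "chain_start M p (chain_step M p h)
       = (1 - p * (1 - p) ^ M) * chain_start M p h - (p * (1 - p) ^ M)\<^sup>2 * h True"
proof -
  define r where "r = (1 - p) ^ (M - 1)"
  have M: "(1 - p) ^ M = (1 - p) * r"
    using assms by (simp add: r_def power_eq_if)
  show ?thesis
    unfolding chain_start_def chain_step_def r_def[symmetric] M
    by (simp add: power2_eq_square algebra_simps)
qed

lemma chain_start_chain_step_le:
  assumes "1 \<le> M" "0 \<le> h True"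
  shows "chain_start M p (chain_step M p h) \<le> (1 - p * (1 - p) ^ M) * chain_start M p h"
  using assms by (simp add: chain_start_chain_step)

lemma one_minus_mult_power_nonneg:
  "0 \<le> p \<Longrightarrow> p \<le> 1 \<Longrightarrow> 0 \<le> 1 - p * (1 - p) ^ M" for p :: real
  using mult_le_one[of p "(1 - p) ^ M"] by (simp add: power_le_one)

lemma chain_start_const: "chain_start M p (\<lambda>_. 1) = 1 - p * (1 - p) ^ M"
  by (simp add: chain_start_def algebra_simps)

lemma chain_start_nonneg:
  "0 \<le> p \<Longrightarrow> p \<le> 1 \<Longrightarrow> 0 \<le> h True \<Longrightarrow> 0 \<le> h False \<Longrightarrow> 0 \<le> chain_start M p h"
  by (simp add: chain_start_def power_le_one)

lemma chain_step_nonneg: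
  "0 \<le> p \<Longrightarrow> p \<le> 1 \<Longrightarrow> 0 \<le> h True \<Longrightarrow> 0 \<le> h False \<Longrightarrow> 0 \<le> chain_step M p h s"
  by (simp add: chain_step_def power_le_one)

definition window_weighted ::
    "nat \<Rightarrow> nat \<Rightarrow> real \<Rightarrow> nat \<Rightarrow> (nat \<Rightarrow> bool \<Rightarrow> real) \<Rightarrow> (nat \<Rightarrow> bool) \<Rightarrow> real" where
  "window_weighted M d p n g c =
     (\<Prod>i\<in>{1..n}. cover_cond_prob M d p c i) * (\<Prod>i\<in>{n - d<..n}. g i (c i))"

lemma window_weighted_nonneg:
  assumes "0 \<le> p" "p \<le> 1" "\<And>i b. 0 \<le> g i b"
  shows "0 \<le> window_weighted M d p n g c"
  using assms cover_cond_prob_nonneg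
  by (simp add: window_weighted_def prod_nonneg)

lemma prod_cover_cond_prob_upd_Suc:
  "(\<Prod>i\<in>{1..Suc n}. cover_cond_prob M d p (c(Suc n := y)) i)
     = cover_cond_prob M d p (c(Suc n := y)) (Suc n) * (\<Prod>i\<in>{1..n}. cover_cond_prob M d p c i)"
proof -
  have "(\<Prod>i\<in>{1..n}. cover_cond_prob M d p (c(Suc n := y)) i) = (\<Prod>i\<in>{1..n}. cover_cond_prob M d p c i)"
    by (intro prod.cong) (auto simp: cover_cond_prob_def)
  moreover have "{1..Suc n} = insert (Suc n) {1..n}"
    by auto
  ultimately show ?thesis
    by simp
qed

lemma cover_cond_prob_upd_Suc_last:
  "1 \<le> d \<Longrightarrow> cover_cond_prob M d p (c(Suc n := y)) (Suc n)
     = (if \<not> y \<or> (d \<le> n \<and> c (Suc n - d)) then 1 else busy_prob M d p (Suc n))"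
  by (auto simp: cover_cond_prob_def)

lemma window_weighted_Suc_head:
  assumes "n < d"
  shows "p * window_weighted M d p (Suc n) g (c(Suc n := True))
           + (1 - p) * window_weighted M d p (Suc n) g (c(Suc n := False))
       = chain_start M p (g (Suc n)) * window_weighted M d p n g c"
proof -
  have window: "{Suc n - d<..Suc n} = insert (Suc n) {n - d<..n}"
    using assms by auto
  have "(\<Prod>i\<in>{n - d<..n}. g i ((c(Suc n := y)) i)) = (\<Prod>i\<in>{n - d<..n}. g i (c i))" for y
    by (intro prod.cong) auto
  then have "window_weighted M d p (Suc n) g (c(Suc n := y))
      = cover_cond_prob M d p (c(Suc n := y)) (Suc n) * g (Suc n) y * window_weighted M d p n g c" for y
    unfolding window_weighted_def window prod_cover_cond_prob_upd_Suc by simp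
  with assms show ?thesis
    by (simp add: cover_cond_prob_upd_Suc_last busy_prob_def chain_start_def algebra_simps)
qed

lemma window_weighted_Suc_tail:
  assumes "1 \<le> d" "d \<le> n"
  shows "p * window_weighted M d p (Suc n) g (c(Suc n := True))
           + (1 - p) * window_weighted M d p (Suc n) g (c(Suc n := False))
       = window_weighted M d p n (g(Suc n - d := chain_step M p (g (Suc n)))) c"
proof -
  define k where "k = Suc n - d"
  have old_window: "{n - d<..n} = insert k {k<..n}"
    and new_window: "{Suc n - d<..Suc n} = insert (Suc n) {k<..n}"
    using assms by (auto simp: k_def)
  define A where "A = (\<Prod>i\<in>{1..n}. cover_cond_prob M d p c i)"
  define R where "R = (\<Prod>i\<in>{k<..n}. g i (c i))"
  have "(\<Prod>i\<in>{k<..n}. g i ((c(Suc n := y)) i)) = R" for y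
    unfolding R_def by (intro prod.cong) auto
  then have lhs: "window_weighted M d p (Suc n) g (c(Suc n := y))
      = cover_cond_prob M d p (c(Suc n := y)) (Suc n) * A * (g (Suc n) y * R)" for y
    unfolding window_weighted_def new_window prod_cover_cond_prob_upd_Suc A_def by simp
  have "(\<Prod>i\<in>{k<..n}. (g(k := h)) i (c i)) = R" for h
    unfolding R_def by (intro prod.cong) auto
  then have rhs: "window_weighted M d p n (g(k := h)) c = A * (h (c k) * R)" for h
    unfolding window_weighted_def old_window A_def by simp
  show ?thesis
    using assms unfolding lhs k_def[symmetric] rhs
    by (cases "c k")
      (simp_all add: k_def cover_cond_prob_upd_Suc_last busy_prob_def chain_step_def algebra_simps)
qed

lemma prod_chain_start_shift_le:
  assumes "0 \<le> p" "p \<le> 1" "1 \<le> M" "1 \<le> d" "d \<le> n" "\<And>i b. 0 \<le> g i b"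
  shows "(1 - p * (1 - p) ^ M) ^ (n - d)
           * (\<Prod>i\<in>{n - d<..n}. chain_start M p ((g(Suc n - d := chain_step M p (g (Suc n)))) i))
       \<le> (1 - p * (1 - p) ^ M) ^ (Suc n - d) * (\<Prod>i\<in>{Suc n - d<..Suc n}. chain_start M p (g i))"
proof -
  define k where "k = Suc n - d"
  define Q where "Q = (\<Prod>i\<in>{k<..n}. chain_start M p (g i))"
  have old_window: "{n - d<..n} = insert k {k<..n}"
    and new_window: "{Suc n - d<..Suc n} = insert (Suc n) {k<..n}"
    using assms by (auto simp: k_def)
  have "(\<Prod>i\<in>{k<..n}. chain_start M p ((g(k := h)) i)) = Q" for h
    unfolding Q_def by (intro prod.cong) auto
  then have lhs: "(\<Prod>i\<in>{n - d<..n}. chain_start M p ((g(k := h)) i)) = chain_start M p h * Q" for h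
    unfolding old_window by simp
  have rhs: "(\<Prod>i\<in>{Suc n - d<..Suc n}. chain_start M p (g i)) = chain_start M p (g (Suc n)) * Q"
    unfolding new_window Q_def by simp
  have "0 \<le> Q"
    unfolding Q_def using assms by (simp add: prod_nonneg chain_start_nonneg)
  have "(1 - p * (1 - p) ^ M) ^ (n - d)
          * (\<Prod>i\<in>{n - d<..n}. chain_start M p ((g(k := chain_step M p (g (Suc n)))) i))
      = (1 - p * (1 - p) ^ M) ^ (n - d) * (chain_start M p (chain_step M p (g (Suc n))) * Q)"
    unfolding lhs ..
  also have "\<dots> \<le> (1 - p * (1 - p) ^ M) ^ (n - d) * ((1 - p * (1 - p) ^ M) * chain_start M p (g (Suc n)) * Q)"
    using assms \<open>0 \<le> Q\<close> one_minus_mult_power_nonneg[of p M]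
    by (intro mult_left_mono mult_right_mono chain_start_chain_step_le) simp_all
  also have "\<dots> = (1 - p * (1 - p) ^ M) ^ (Suc n - d) * (\<Prod>i\<in>{Suc n - d<..Suc n}. chain_start M p (g i))"
    using assms unfolding rhs by (simp add: Suc_diff_le)
  finally show ?thesis
    unfolding k_def .
qed

lemma nn_integral_window_weighted_le:
  assumes "0 \<le> p" "p \<le> 1" "1 \<le> M" "1 \<le> d" "\<And>i b. 0 \<le> g i b"
  shows "(\<integral>\<^sup>+c. ennreal (window_weighted M d p n g c) \<partial>codeword_pmf n p)
       \<le> ennreal ((1 - p * (1 - p) ^ M) ^ (n - d) * (\<Prod>i\<in>{n - d<..n}. chain_start M p (g i)))"
  using assms(5)
proof (induction n arbitrary: g)
  case 0
  then show ?case
    by (simp add: window_weighted_def codeword_pmf_def)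
next
  case (Suc n)
  have "{1..Suc n} = insert (Suc n) {1..n}"
    by auto
  then have integrate_last: "(\<integral>\<^sup>+c. ennreal (window_weighted M d p (Suc n) g c) \<partial>codeword_pmf (Suc n) p)
      = (\<integral>\<^sup>+c. ennreal (p * window_weighted M d p (Suc n) g (c(Suc n := True))
                       + (1 - p) * window_weighted M d p (Suc n) g (c(Suc n := False))) \<partial>codeword_pmf n p)"
    using assms(1,2) Suc.prems unfolding codeword_pmf_def
    by (simp add: nn_integral_Pi_pmf_insert_bernoulli window_weighted_nonneg)
  show ?case
  proof (cases "n < d")
    case True
    have "0 \<le> chain_start M p (g (Suc n))"
      using assms Suc.prems by (simp add: chain_start_nonneg)
    then have "(\<integral>\<^sup>+c. ennreal (window_weighted M d p (Suc n) g c) \<partial>codeword_pmf (Suc n) p)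
        = ennreal (chain_start M p (g (Suc n))) * (\<integral>\<^sup>+c. ennreal (window_weighted M d p n g c) \<partial>codeword_pmf n p)"
      unfolding integrate_last window_weighted_Suc_head[OF True]
      using assms Suc.prems by (simp add: ennreal_mult window_weighted_nonneg nn_integral_cmult)
    also have "\<dots> \<le> ennreal (chain_start M p (g (Suc n))) * ennreal (\<Prod>i\<in>{n - d<..n}. chain_start M p (g i))"
      using Suc.IH[OF Suc.prems] True by (simp add: mult_left_mono)
    also have "\<dots> = ennreal ((1 - p * (1 - p) ^ M) ^ (Suc n - d)
                            * (\<Prod>i\<in>{Suc n - d<..Suc n}. chain_start M p (g i)))"
    proof -
      have "{Suc n - d<..Suc n} = insert (Suc n) {n - d<..n}"
        using True by auto
      then show ?thesis
        using True assms Suc.prems by (simp add: ennreal_mult prod_nonneg chain_start_nonneg)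
    qed
    finally show ?thesis .
  next
    case False
    let ?g' = "g(Suc n - d := chain_step M p (g (Suc n)))"
    have "\<And>i b. 0 \<le> ?g' i b"
      using assms(1,2) Suc.prems by (simp add: chain_step_nonneg)
    then have "(\<integral>\<^sup>+c. ennreal (window_weighted M d p n ?g' c) \<partial>codeword_pmf n p)
        \<le> ennreal ((1 - p * (1 - p) ^ M) ^ (n - d) * (\<Prod>i\<in>{n - d<..n}. chain_start M p (?g' i)))"
      by (rule Suc.IH)
    also have "\<dots> \<le> ennreal ((1 - p * (1 - p) ^ M) ^ (Suc n - d)
                            * (\<Prod>i\<in>{Suc n - d<..Suc n}. chain_start M p (g i)))"
      using False assms Suc.prems by (intro ennreal_leI prod_chain_start_shift_le) auto
    finally show ?thesis
      using False assms(4) by (simp add: integrate_last window_weighted_Suc_tail)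
  qed
qed

theorem mainTheorem3:
  fixes M n d :: nat and p :: real
  assumes "M \<ge> 1" and "n \<ge> 2" and "1 \<le> d" and "d \<le> n - 1"
    and "0 < p" and "p < 1"
  shows "measure_pmf.prob (pair_pmf (codeword_pmf n p) (cover_pmf M n d p))
           {(c, U). \<forall>i\<in>{1..n}. covered d c U i}
         \<le> (1 - p * (1 - p) ^ M) ^ n"
proof -
  have p: "0 \<le> p" "p \<le> 1"
    using assms(5,6) by simp_all
  have "emeasure (pair_pmf (codeword_pmf n p) (cover_pmf M n d p)) {(c, U). \<forall>i\<in>{1..n}. covered d c U i}
      = (\<integral>\<^sup>+c. emeasure (cover_pmf M n d p) {U. \<forall>i\<in>{1..n}. covered d c U i} \<partial>codeword_pmf n p)"
    by (rule emeasure_pair_pmf_fiberwise)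
  also have "\<dots> = (\<integral>\<^sup>+c. ennreal (window_weighted M d p n (\<lambda>_ _. 1) c) \<partial>codeword_pmf n p)"
    unfolding measure_pmf.emeasure_eq_measure prob_all_covered_given_codeword[OF p] window_weighted_def
    by simp
  also have "\<dots> \<le> ennreal ((1 - p * (1 - p) ^ M) ^ (n - d) * (1 - p * (1 - p) ^ M) ^ card {n - d<..n})"
    using nn_integral_window_weighted_le[OF p assms(1,3), of "\<lambda>_ _. 1" n]
    by (simp add: chain_start_const)
  also have "\<dots> = ennreal ((1 - p * (1 - p) ^ M) ^ n)"
    by (simp flip: power_add)
  finally show ?thesis
    using p one_minus_mult_power_nonneg[of p M]
    by (simp add: measure_pmf.emeasure_eq_measure)
qed

end
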